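(* For every $k\in\mathbb N$ and $t\in(0,1)$, the point $\lambda=-\dfrac{1-t}{k+2-(k+1)t}$ does not belong to the limit set $\mathcal L(A_{\infty,k,t})$.
   Context: For $x\in\mathbb R$, $x_+=\max\{x,0\}$. For $k\in\mathbb{N}$ and $t\in(0,1)$, $A_{\infty,k,t}=(A(i,j))_{i,j\ge1}$ is the infinite Toeplitz Hessenberg matrix with $A(i,j)=a_{j-i}$ for $j\ge i$, $A(i+1,i)=1$, and $A(i,j)=0$ for $i\ge j+2$, where $(a_0,a_1,\ldots)$ is the unique sequence for which the leading principal minors satisfy $\det A(\{1,\dots,n\})=t^{(n-k-1)_+}$ for all $n\in\mathbb N$. $A_{n,k,t}$ is its leading principal $n\times n$ submatrix. The limit set $\mathcal L(A_{\infty,k,t})$ is the set of all $\lambda\in\mathbb C$ such that $\lambda=\lim_{m\to\infty}\lambda_m$ for some increasing sequence $i_m\to\infty$ and eigenvalues $\lambda_m\in\sigma(A_{i_m,k,t})$. *)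

theory Defs
  imports "Jordan_Normal_Form.Char_Poly"
begin

text \<open>Leading principal n x n submatrix (0-based indices) of the infinite Toeplitz
  Hessenberg matrix with entries A(i,j) = a (j - i) for j >= i, A(i+1,i) = 1,
  and 0 further below the diagonal.\<close>
definition toeplitz_hessenberg :: "(nat \<Rightarrow> real) \<Rightarrow> nat \<Rightarrow> real mat" where
  "toeplitz_hessenberg a n =
     mat n n (\<lambda>(i, j). if i \<le> j then a (j - i) else if i = Suc j then 1 else 0)"

text \<open>The unique sequence whose leading principal minors are t^((n-k-1)_+);
  natural-number subtraction realises the positive part.\<close>
definition A_seq :: "nat \<Rightarrow> real \<Rightarrow> nat \<Rightarrow> real" where
  "A_seq k t = (THE a. \<forall>n. det (toeplitz_hessenberg a n) = t ^ (n - k - 1))"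

definition A_mat :: "nat \<Rightarrow> real \<Rightarrow> nat \<Rightarrow> real mat" where
  "A_mat k t n = toeplitz_hessenberg (A_seq k t) n"

definition limit_set :: "(nat \<Rightarrow> real mat) \<Rightarrow> complex set" where
  "limit_set M = {z. \<exists>idx \<mu>. strict_mono idx \<and>
       (\<forall>m. eigenvalue (map_mat complex_of_real (M (idx m))) (\<mu> m)) \<and> \<mu> \<longlonglongrightarrow> z}"

end

theory Submission
  imports Defs "HOL-Computational_Algebra.Formal_Power_Series"
begin

text \<open>
  Let \<open>p n z = det (A_n - z I)\<close>. Expanding along the first column shows that the minors of a
  Toeplitz-Hessenberg matrix with symbol \<open>a\<close> have generating function
  \<open>1 / (1 - \<Sum>r. (-1)^r a r X^(r+1))\<close>. For the prescribed minors \<open>t^(n-k-1)\<close> this makes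
  \<open>\<Sum>n. p n z X^n\<close> a rational function whose denominator has degree \<open>k + 2\<close>, so \<open>p n z\<close>
  satisfies a linear recurrence of order \<open>k + 2\<close> once \<open>n \<ge> k + 2\<close>.

  At \<open>z = \<lambda>\<close> the coefficients of this recurrence are positive and sum to 1. Such an averaging
  recurrence conserves a weighted mean of the last \<open>k + 2\<close> values (here \<open>1 + (k+1)(1-t) \<noteq> 0\<close>)
  and contracts the deviations from it geometrically, so eventually the last values lie in a
  narrow cone around a nonzero number. Lying strictly in the cone at one time is an open
  condition on finitely many values, and the cone is invariant under recurrences with nearby
  coefficients. Hence for all \<open>z\<close> near \<open>\<lambda>\<close> the values \<open>p n z\<close> are nonzero for all large \<open>n\<close>,
  which rules out eigenvalues of \<open>A_n\<close> converging to \<open>\<lambda>\<close> along \<open>n \<rightarrow> \<infinity>\<close>.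
\<close>

section \<open>Determinants of Toeplitz-Hessenberg matrices\<close>

definition toeplitz_hessenberg_mat :: "(nat \<Rightarrow> 'a::comm_ring_1) \<Rightarrow> nat \<Rightarrow> 'a mat" where
  "toeplitz_hessenberg_mat a n =
     mat n n (\<lambda>(i, j). if i \<le> j then a (j - i) else if i = Suc j then 1 else 0)"

definition bordered_toeplitz_hessenberg :: "(nat \<Rightarrow> 'a::comm_ring_1) \<Rightarrow> (nat \<Rightarrow> 'a) \<Rightarrow> nat \<Rightarrow> 'a mat" where
  "bordered_toeplitz_hessenberg b a n = mat n n (\<lambda>(i, j).
     if i = 0 then b j else if i \<le> j then a (j - i) else if i = Suc j then 1 else 0)"

lemma toeplitz_hessenberg_eq_mat: "toeplitz_hessenberg a n = toeplitz_hessenberg_mat a n"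
  unfolding toeplitz_hessenberg_def toeplitz_hessenberg_mat_def ..

lemma toeplitz_hessenberg_mat_eq_bordered:
  "toeplitz_hessenberg_mat a n = bordered_toeplitz_hessenberg a a n"
  unfolding toeplitz_hessenberg_mat_def bordered_toeplitz_hessenberg_def by (rule eq_matI) auto

lemma det_toeplitz_hessenberg_mat_0: "det (toeplitz_hessenberg_mat a 0) = 1"
  unfolding toeplitz_hessenberg_mat_def by (simp add: det_def)

text \<open>Laplace expansion along the first column: only the entries in rows 0 and 1 are nonzero.\<close>
lemma det_bordered_toeplitz_hessenberg_Suc_Suc:
  "det (bordered_toeplitz_hessenberg b a (Suc (Suc n))) =
     b 0 * det (toeplitz_hessenberg_mat a (Suc n)) - det (bordered_toeplitz_hessenberg (b \<circ> Suc) a (Suc n))"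
proof -
  let ?A = "bordered_toeplitz_hessenberg b a (Suc (Suc n))"
  have A: "?A \<in> carrier_mat (Suc (Suc n)) (Suc (Suc n))"
    unfolding bordered_toeplitz_hessenberg_def by auto
  have "det ?A = (\<Sum>i<Suc (Suc n). ?A $$ (i, 0) * cofactor ?A i 0)"
    by (rule laplace_expansion_column[OF A]) auto
  also have "\<dots> = ?A $$ (0, 0) * cofactor ?A 0 0 + ?A $$ (1, 0) * cofactor ?A 1 0
      + (\<Sum>i<n. ?A $$ (Suc (Suc i), 0) * cofactor ?A (Suc (Suc i)) 0)"
    by (simp only: sum.lessThan_Suc_shift) simp
  also have "(\<Sum>i<n. ?A $$ (Suc (Suc i), 0) * cofactor ?A (Suc (Suc i)) 0) = 0"
    by (rule sum.neutral) (auto simp: bordered_toeplitz_hessenberg_def)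
  also have "mat_delete ?A 0 0 = toeplitz_hessenberg_mat a (Suc n)"
    by (rule eq_matI) (auto simp: bordered_toeplitz_hessenberg_def toeplitz_hessenberg_mat_def mat_delete_def)
  moreover have "mat_delete ?A 1 0 = bordered_toeplitz_hessenberg (b \<circ> Suc) a (Suc n)"
    by (rule eq_matI) (auto simp: bordered_toeplitz_hessenberg_def mat_delete_def)
  ultimately show ?thesis
    by (simp add: cofactor_def bordered_toeplitz_hessenberg_def)
qed

lemma det_bordered_toeplitz_hessenberg:
  "det (bordered_toeplitz_hessenberg b a (Suc n)) =
     (\<Sum>r\<le>n. (-1) ^ r * b r * det (toeplitz_hessenberg_mat a (n - r)))"
proof (induction n arbitrary: b)
  case 0
  then show ?case
    by (simp add: bordered_toeplitz_hessenberg_def det_single det_toeplitz_hessenberg_mat_0)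
next
  case (Suc n)
  then show ?case
    unfolding det_bordered_toeplitz_hessenberg_Suc_Suc sum.atMost_Suc_shift
    by (simp add: sum_negf[symmetric])
qed

lemma det_toeplitz_hessenberg_mat_Suc:
  "det (toeplitz_hessenberg_mat a (Suc n)) =
     (\<Sum>r\<le>n. (-1) ^ r * a r * det (toeplitz_hessenberg_mat a (n - r)))"
  using det_bordered_toeplitz_hessenberg[of a a n] by (simp add: toeplitz_hessenberg_mat_eq_bordered)

definition minors_fps :: "(nat \<Rightarrow> 'a::field) \<Rightarrow> 'a fps" where
  "minors_fps a = Abs_fps (\<lambda>n. det (toeplitz_hessenberg_mat a n))"

definition symbol_fps :: "(nat \<Rightarrow> 'a::field) \<Rightarrow> 'a fps" where
  "symbol_fps a = Abs_fps (\<lambda>r. if r = 0 then 0 else (-1) ^ (r - 1) * a (r - 1))"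

lemma symbol_fps_mult_minors_fps: "(1 - symbol_fps a) * minors_fps a = 1"
proof -
  have "minors_fps a = 1 + symbol_fps a * minors_fps a"
  proof (rule fps_ext)
    fix n
    show "fps_nth (minors_fps a) n = fps_nth (1 + symbol_fps a * minors_fps a) n"
    proof (cases n)
      case 0
      then show ?thesis by (simp add: minors_fps_def symbol_fps_def det_toeplitz_hessenberg_mat_0)
    next
      case (Suc m)
      have "fps_nth (symbol_fps a * minors_fps a) (Suc m) =
          (\<Sum>i=0..m. fps_nth (symbol_fps a) (Suc i) * fps_nth (minors_fps a) (m - i))"
        unfolding fps_mult_nth sum.atLeast0_atMost_Suc_shift by (simp add: symbol_fps_def)
      also have "\<dots> = det (toeplitz_hessenberg_mat a (Suc m))"
        by (simp add: det_toeplitz_hessenberg_mat_Suc symbol_fps_def minors_fps_def atMost_atLeast0)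
      finally show ?thesis using Suc by (simp add: minors_fps_def)
    qed
  qed
  then show ?thesis by (simp add: algebra_simps)
qed

lemma symbol_fps_inj: "inj symbol_fps"
proof (rule injI, rule ext)
  fix a b :: "nat \<Rightarrow> 'a" and j
  assume "symbol_fps a = symbol_fps b"
  then have "fps_nth (symbol_fps a) (Suc j) = fps_nth (symbol_fps b) (Suc j)" by simp
  then show "a j = b j" by (simp add: symbol_fps_def)
qed

lemma minors_fps_eq_iff:
  assumes "fps_nth f 0 = 1"
  shows "minors_fps a = f \<longleftrightarrow> symbol_fps a = 1 - inverse f"
proof
  assume "minors_fps a = f"
  then have "inverse f = 1 - symbol_fps a"
    using symbol_fps_mult_minors_fps[of a] by (metis fps_inverse_unique mult.commute)
  then show "symbol_fps a = 1 - inverse f" by simp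
next
  assume "symbol_fps a = 1 - inverse f"
  then have "f * (inverse f * minors_fps a) = f"
    using symbol_fps_mult_minors_fps[of a] by simp
  then show "minors_fps a = f"
    using assms by (simp add: mult.assoc[symmetric] inverse_mult_eq_1')
qed

lemma ex1_toeplitz_hessenberg_minors:
  fixes f :: "nat \<Rightarrow> 'a::field"
  assumes "f 0 = 1"
  shows "\<exists>!a. \<forall>n. det (toeplitz_hessenberg_mat a n) = f n"
proof -
  have iff: "(\<forall>n. det (toeplitz_hessenberg_mat a n) = f n) \<longleftrightarrow> symbol_fps a = 1 - inverse (Abs_fps f)"
    for a
    using minors_fps_eq_iff[of "Abs_fps f" a] assms by (auto simp: minors_fps_def fps_eq_iff)
  define a0 where "a0 = (\<lambda>j. (-1) ^ j * fps_nth (1 - inverse (Abs_fps f)) (Suc j))"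
  have "symbol_fps a0 = 1 - inverse (Abs_fps f)"
    by (rule fps_ext) (auto simp: symbol_fps_def a0_def assms simp flip: power_add)
  then show ?thesis
    unfolding iff using symbol_fps_inj by (metis injD)
qed

lemma det_A_seq: "det (toeplitz_hessenberg (A_seq k t) n) = t ^ (n - k - 1)"
  using theI'[OF ex1_toeplitz_hessenberg_minors[of "\<lambda>n. t ^ (n - k - 1)"]]
  by (simp add: A_seq_def toeplitz_hessenberg_eq_mat)

section \<open>The characteristic polynomials of \<open>A_mat k t n\<close>\<close>

definition A_char :: "nat \<Rightarrow> real \<Rightarrow> complex \<Rightarrow> nat \<Rightarrow> complex" where
  "A_char k t z n = det (char_matrix (map_mat complex_of_real (A_mat k t n)) z)"

definition A_seq_shift :: "nat \<Rightarrow> real \<Rightarrow> complex \<Rightarrow> nat \<Rightarrow> complex" where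
  "A_seq_shift k t z j = complex_of_real (A_seq k t j) - (if j = 0 then z else 0)"

lemma char_matrix_A_mat:
  "char_matrix (map_mat complex_of_real (A_mat k t n)) z = toeplitz_hessenberg_mat (A_seq_shift k t z) n"
  by (rule eq_matI)
    (auto simp: char_matrix_def A_mat_def toeplitz_hessenberg_def toeplitz_hessenberg_mat_def A_seq_shift_def)

lemma A_char_eq_det: "A_char k t z n = det (toeplitz_hessenberg_mat (A_seq_shift k t z) n)"
  by (simp add: A_char_def char_matrix_A_mat)

lemma minors_fps_A_seq:
  "minors_fps (complex_of_real \<circ> A_seq k t) = Abs_fps (\<lambda>n. complex_of_real t ^ (n - k - 1))"
proof -
  interpret of_real_hom: comm_ring_hom complex_of_real
    by unfold_locales auto
  have "toeplitz_hessenberg_mat (complex_of_real \<circ> A_seq k t) n =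
      map_mat complex_of_real (toeplitz_hessenberg (A_seq k t) n)" for n
    by (rule eq_matI) (auto simp: toeplitz_hessenberg_mat_def toeplitz_hessenberg_def)
  then show ?thesis
    by (simp add: minors_fps_def of_real_hom.hom_det det_A_seq)
qed

lemma symbol_fps_A_seq_shift:
  "symbol_fps (A_seq_shift k t z) = symbol_fps (complex_of_real \<circ> A_seq k t) - fps_const z * fps_X"
  by (rule fps_ext) (auto simp: symbol_fps_def A_seq_shift_def fps_X_def)

definition char_numerator :: "nat \<Rightarrow> real \<Rightarrow> complex fps" where
  "char_numerator k t =
     Abs_fps (\<lambda>n. if n = 0 then 1 else if n \<le> Suc k then 1 - complex_of_real t else 0)"

lemma minors_fps_A_seq_mult:
  "minors_fps (complex_of_real \<circ> A_seq k t) * (1 - fps_const (complex_of_real t) * fps_X) = char_numerator k t"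
proof (rule fps_ext)
  fix n
  show "fps_nth (minors_fps (complex_of_real \<circ> A_seq k t) * (1 - fps_const (complex_of_real t) * fps_X)) n =
      fps_nth (char_numerator k t) n"
  proof (cases n)
    case (Suc m)
    moreover have "complex_of_real t ^ (Suc m - k - 1) - complex_of_real t * complex_of_real t ^ (m - k - 1) =
        fps_nth (char_numerator k t) (Suc m)"
    proof (cases "m \<le> k")
      case False
      then have "Suc m - k - 1 = Suc (m - k - 1)" by simp
      with False show ?thesis by (simp add: char_numerator_def)
    qed (simp add: char_numerator_def)
    ultimately show ?thesis
      by (simp add: minors_fps_A_seq algebra_simps)
  qed (simp add: minors_fps_A_seq char_numerator_def)
qed

definition char_rec_coeff :: "real \<Rightarrow> complex \<Rightarrow> nat \<Rightarrow> complex" where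
  "char_rec_coeff t z i = (if i = 1 then complex_of_real t - z else - z * (1 - complex_of_real t))"

definition char_denominator :: "nat \<Rightarrow> real \<Rightarrow> complex \<Rightarrow> complex fps" where
  "char_denominator k t z =
     Abs_fps (\<lambda>i. if i = 0 then 1 else if i \<le> k + 2 then - char_rec_coeff t z i else 0)"

text \<open>With \<open>M = char_numerator k t\<close> the minors of \<open>A_mat k t\<close> have generating function
  \<open>M / (1 - t X)\<close>, so shifting the diagonal by \<open>z\<close> turns the reciprocal generating function
  \<open>1 - symbol\<close> into \<open>(1 - t X) / M + z X = (1 - t X + z X M) / M\<close>.\<close>
lemma char_denominator_mult_A_char:
  "char_denominator k t z * Abs_fps (A_char k t z) = char_numerator k t"
proof -
  let ?S = "symbol_fps (complex_of_real \<circ> A_seq k t)" and ?M = "char_numerator k t"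
  let ?tX = "fps_const (complex_of_real t) * fps_X"
  have "(1 - ?S) * ?M = (1 - ?S) * minors_fps (complex_of_real \<circ> A_seq k t) * (1 - ?tX)"
    by (simp only: minors_fps_A_seq_mult[symmetric] mult.assoc)
  then have "(1 - ?S) * ?M = 1 - ?tX"
    by (simp only: symbol_fps_mult_minors_fps mult_1)
  moreover have "char_denominator k t z = 1 - ?tX + fps_const z * (fps_X * ?M)"
    by (rule fps_ext) (auto simp: char_denominator_def char_rec_coeff_def char_numerator_def)
  ultimately have "char_denominator k t z = (1 - ?S) * ?M + fps_const z * (fps_X * ?M)"
    by simp
  also have "\<dots> = (1 - symbol_fps (A_seq_shift k t z)) * ?M"
    by (simp add: symbol_fps_A_seq_shift algebra_simps)
  finally have "char_denominator k t z = (1 - symbol_fps (A_seq_shift k t z)) * ?M" .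
  moreover have "Abs_fps (A_char k t z) = minors_fps (A_seq_shift k t z)"
    by (simp add: minors_fps_def A_char_eq_det fps_eq_iff)
  ultimately show ?thesis
    using symbol_fps_mult_minors_fps[of "A_seq_shift k t z"] by (simp add: ac_simps)
qed

lemma A_char_rec:
  "A_char k t z n = fps_nth (char_numerator k t) n +
     (\<Sum>i=1..k+2. char_rec_coeff t z i * (if i \<le> n then A_char k t z (n - i) else 0))"
proof -
  let ?R = "char_denominator k t z"
  have "fps_nth (char_numerator k t) n = fps_nth (?R * Abs_fps (A_char k t z)) n"
    by (simp only: char_denominator_mult_A_char)
  also have "\<dots> = (\<Sum>i=0..n. fps_nth ?R i * A_char k t z (n - i))"
    by (simp add: fps_mult_nth)
  also have "\<dots> = A_char k t z n + (\<Sum>i=Suc 0..n. fps_nth ?R i * A_char k t z (n - i))"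
    by (subst sum.atLeast_Suc_atMost) (auto simp: char_denominator_def)
  also have "(\<Sum>i=Suc 0..n. fps_nth ?R i * A_char k t z (n - i)) =
      (\<Sum>i\<in>{i\<in>{1..n}. i \<le> k + 2}. - char_rec_coeff t z i * A_char k t z (n - i))"
    by (subst sum.inter_filter) (auto intro!: sum.cong simp: char_denominator_def)
  also have "{i\<in>{1..n}. i \<le> k + 2} = {i\<in>{1..k+2}. i \<le> n}"
    by auto
  also have "(\<Sum>i\<in>{i\<in>{1..k+2}. i \<le> n}. - char_rec_coeff t z i * A_char k t z (n - i)) =
      - (\<Sum>i=1..k+2. char_rec_coeff t z i * (if i \<le> n then A_char k t z (n - i) else 0))"
    by (subst sum.inter_filter) (auto intro!: sum.cong simp: sum_negf[symmetric])
  finally show ?thesis by (simp add: algebra_simps)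
qed

lemma A_char_rec_tail:
  assumes "k + 2 \<le> n"
  shows "A_char k t z n = (\<Sum>i=1..k+2. char_rec_coeff t z i * A_char k t z (n - i))"
  using A_char_rec[of k t z n] assms by (simp add: char_numerator_def)

lemma A_char_Suc:
  "A_char k t z (Suc n) = (\<Sum>r\<le>n. (-1) ^ r * A_seq_shift k t z r * A_char k t z (n - r))"
  unfolding A_char_eq_det by (rule det_toeplitz_hessenberg_mat_Suc)

lemma tendsto_A_char:
  assumes "(f \<longlongrightarrow> z) F"
  shows "((\<lambda>x. A_char k t (f x) n) \<longlongrightarrow> A_char k t z n) F"
proof (induction n rule: less_induct)
  case (less n)
  show ?case
  proof (cases n)
    case 0
    then show ?thesis by (simp add: A_char_eq_det det_toeplitz_hessenberg_mat_0)
  next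
    case (Suc m)
    have "((\<lambda>x. A_seq_shift k t (f x) r) \<longlongrightarrow> A_seq_shift k t z r) F" for r
      unfolding A_seq_shift_def using assms by (auto intro!: tendsto_intros)
    moreover have "((\<lambda>x. A_char k t (f x) (m - r)) \<longlongrightarrow> A_char k t z (m - r)) F" for r
      using Suc by (intro less.IH) simp
    ultimately show ?thesis
      unfolding Suc A_char_Suc by (intro tendsto_intros)
  qed
qed

lemma tendsto_char_rec_coeff:
  "(f \<longlongrightarrow> z) F \<Longrightarrow> ((\<lambda>x. char_rec_coeff t (f x) i) \<longlongrightarrow> char_rec_coeff t z i) F"
  unfolding char_rec_coeff_def by (auto intro!: tendsto_intros)

section \<open>Averaging recurrences\<close>

lemma sum_lessThan_diff_eq_sum_last:
  fixes f :: "nat \<Rightarrow> 'a::ab_group_add"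
  assumes "i \<le> n"
  shows "(\<Sum>m<n. f m) - (\<Sum>m<n - i. f m) = (\<Sum>j=1..i. f (n - j))"
  using assms
proof (induction i)
  case (Suc i)
  then have "n - i = Suc (n - Suc i)" by simp
  then have "(\<Sum>m<n - i. f m) = (\<Sum>m<n - Suc i. f m) + f (n - Suc i)" by simp
  with Suc show ?case by (simp add: algebra_simps)
qed simp

lemma sum_triangle_swap:
  fixes f :: "nat \<Rightarrow> nat \<Rightarrow> 'a::comm_monoid_add"
  shows "(\<Sum>i=1..n. \<Sum>j=1..i. f i j) = (\<Sum>j=1..n. \<Sum>i=j..n. f i j)"
  by (induction n) (auto simp: sum.distrib)

locale averaging_recurrence =
  fixes K :: nat and \<alpha> :: "nat \<Rightarrow> real"
  assumes order_pos: "1 \<le> K"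
    and weights_pos: "\<And>j. j \<in> {1..K} \<Longrightarrow> 0 < \<alpha> j"
    and weights_sum: "(\<Sum>j=1..K. \<alpha> j) = 1"
begin

definition tail_weight :: "nat \<Rightarrow> real" where
  "tail_weight j = (\<Sum>i=j..K. \<alpha> i)"

definition total_tail_weight :: real where
  "total_tail_weight = (\<Sum>j=1..K. tail_weight j)"

lemmas weights_sum_Suc_0 [simp] = weights_sum[unfolded One_nat_def]

lemma weights_nonneg: "1 \<le> j \<Longrightarrow> j \<le> K \<Longrightarrow> 0 \<le> \<alpha> j"
  using weights_pos[of j] by simp

lemma tail_weight_1: "tail_weight 1 = 1"
  unfolding tail_weight_def by (rule weights_sum)

lemma tail_weight_nonneg: "1 \<le> j \<Longrightarrow> 0 \<le> tail_weight j"
  unfolding tail_weight_def by (intro sum_nonneg) (auto intro: weights_nonneg)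

lemma tail_weight_le_1: "1 \<le> j \<Longrightarrow> tail_weight j \<le> 1"
  unfolding tail_weight_1[symmetric] tail_weight_def
  by (intro sum_mono2) (auto intro: weights_nonneg)

lemma total_tail_weight_ge_1: "1 \<le> total_tail_weight"
proof -
  have "total_tail_weight = tail_weight 1 + (\<Sum>j=2..K. tail_weight j)"
    unfolding total_tail_weight_def using order_pos
    by (simp add: sum.atLeast_Suc_atMost numeral_2_eq_2)
  moreover have "0 \<le> (\<Sum>j=2..K. tail_weight j)"
    by (intro sum_nonneg tail_weight_nonneg) auto
  ultimately show ?thesis
    using tail_weight_1 by linarith
qed

lemma total_tail_weight_pos: "0 < total_tail_weight"
  using total_tail_weight_ge_1 by simp


text \<open>For every solution of \<open>P n = (\<Sum>j=1..K. \<alpha> j * P (n - j))\<close> this quantity does not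
  depend on \<open>n\<close>.\<close>
definition conserved :: "(nat \<Rightarrow> complex) \<Rightarrow> nat \<Rightarrow> complex" where
  "conserved P n =
     ((\<Sum>m<n. P m) - (\<Sum>i=1..K. of_real (\<alpha> i) * (\<Sum>m<n - i. P m))) / of_real total_tail_weight"

lemma conserved_Suc:
  fixes P :: "nat \<Rightarrow> complex"
  shows "total_tail_weight * (conserved P (Suc n) - conserved P n) =
     P n - (\<Sum>i=1..K. \<alpha> i * (if i \<le> n then P (n - i) else 0))"
proof -
  have last: "(\<Sum>m<Suc n - i. P m) - (\<Sum>m<n - i. P m) = (if i \<le> n then P (n - i) else 0)"
    if "1 \<le> i" for i
  proof (cases "i \<le> n")
    case True
    then have "Suc n - i = Suc (n - i)" by simp
    with True show ?thesis by simp
  qed (use that in simp)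
  have "total_tail_weight * (conserved P (Suc n) - conserved P n) =
      ((\<Sum>m<Suc n. P m) - (\<Sum>i=1..K. \<alpha> i * (\<Sum>m<Suc n - i. P m))) -
      ((\<Sum>m<n. P m) - (\<Sum>i=1..K. \<alpha> i * (\<Sum>m<n - i. P m)))"
    using total_tail_weight_ge_1 by (simp add: conserved_def diff_divide_distrib[symmetric])
  also have "\<dots> = P n - (\<Sum>i=1..K. \<alpha> i * ((\<Sum>m<Suc n - i. P m) - (\<Sum>m<n - i. P m)))"
    by (simp add: right_diff_distrib sum_subtractf)
  also have "\<dots> = P n - (\<Sum>i=1..K. \<alpha> i * (if i \<le> n then P (n - i) else 0))"
    by (simp add: last)
  finally show ?thesis .
qed

lemma conserved_eq_average:
  fixes P :: "nat \<Rightarrow> complex"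
  assumes "K \<le> n"
  shows "total_tail_weight * conserved P n = (\<Sum>j=1..K. tail_weight j * P (n - j))"
proof -
  have "total_tail_weight * conserved P n = (\<Sum>m<n. P m) - (\<Sum>i=1..K. \<alpha> i * (\<Sum>m<n - i. P m))"
    using total_tail_weight_ge_1 by (simp add: conserved_def)
  also have "(\<Sum>m<n. P m) = (\<Sum>i=1..K. complex_of_real (\<alpha> i)) * (\<Sum>m<n. P m)"
    by (simp only: weights_sum flip: of_real_sum) simp
  also have "\<dots> = (\<Sum>i=1..K. \<alpha> i * (\<Sum>m<n. P m))"
    by (rule sum_distrib_right)
  also have "(\<Sum>i=1..K. \<alpha> i * (\<Sum>m<n. P m)) - (\<Sum>i=1..K. \<alpha> i * (\<Sum>m<n - i. P m)) =
      (\<Sum>i=1..K. \<Sum>j=1..i. \<alpha> i * P (n - j))"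
    using assms
    by (simp add: sum_subtractf[symmetric] right_diff_distrib[symmetric]
        sum_lessThan_diff_eq_sum_last sum_distrib_left)
  also have "\<dots> = (\<Sum>j=1..K. \<Sum>i=j..K. \<alpha> i * P (n - j))"
    by (rule sum_triangle_swap)
  also have "\<dots> = (\<Sum>j=1..K. tail_weight j * P (n - j))"
    by (simp add: tail_weight_def sum_distrib_right)
  finally show ?thesis .
qed

lemma conserved_of_inhomogeneous:
  fixes P f :: "nat \<Rightarrow> complex"
  assumes "\<And>n. P n = f n + (\<Sum>i=1..K. \<alpha> i * (if i \<le> n then P (n - i) else 0))"
  shows "total_tail_weight * conserved P n = (\<Sum>m<n. f m)"
proof (induction n)
  case 0
  then show ?case by (simp add: conserved_def)
next
  case (Suc n)
  have "total_tail_weight * conserved P (Suc n) =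
      total_tail_weight * conserved P n + total_tail_weight * (conserved P (Suc n) - conserved P n)"
    by (simp add: algebra_simps)
  also have "\<dots> = (\<Sum>m<Suc n. f m)"
    unfolding conserved_Suc Suc.IH using assms[of n] by simp
  finally show ?case .
qed

lemma conserved_of_solution:
  fixes Q :: "nat \<Rightarrow> complex"
  assumes rec: "\<forall>n\<ge>K. Q n = (\<Sum>j=1..K. \<alpha> j * Q (n - j))" and "K \<le> n"
  shows "conserved Q n = conserved Q K"
  using \<open>K \<le> n\<close>
proof (induction n rule: dec_induct)
  case (step n)
  have "(\<Sum>i=1..K. \<alpha> i * (if i \<le> n then Q (n - i) else 0)) = (\<Sum>j=1..K. \<alpha> j * Q (n - j))"
    using step.hyps by (intro sum.cong) auto
  then have "total_tail_weight * (conserved Q (Suc n) - conserved Q n) = 0"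
    unfolding conserved_Suc using rec step.hyps by simp
  moreover have "complex_of_real total_tail_weight \<noteq> 0"
    using total_tail_weight_ge_1 by simp
  ultimately show ?case
    using step.IH by simp
qed simp

lemma tendsto_conserved:
  fixes P :: "'x \<Rightarrow> nat \<Rightarrow> complex"
  assumes "\<And>m. ((\<lambda>x. P x m) \<longlongrightarrow> Q m) F"
  shows "((\<lambda>x. conserved (P x) n) \<longlongrightarrow> conserved Q n) F"
  unfolding conserved_def using total_tail_weight_pos by (intro tendsto_intros assms) auto

definition min_weight :: real where
  "min_weight = Min (\<alpha> ` {1..K})"

text \<open>The deviation of the value \<open>j\<close> steps back is discounted by \<open>rate ^ (j - 1)\<close>; since
  \<open>1 - min_weight \<le> rate ^ K\<close>, one step of the recurrence shrinks the largest discounted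
  deviation by the factor \<open>rate\<close>.\<close>
definition rate :: real where
  "rate = 1 - min_weight / (2 * K)"

definition width :: real where
  "width = rate ^ (K - 1) / 2"

lemma min_weight_le: "j \<in> {1..K} \<Longrightarrow> min_weight \<le> \<alpha> j"
  unfolding min_weight_def by (rule Min_le) auto

lemma min_weight_pos: "0 < min_weight"
  unfolding min_weight_def using order_pos by (subst Min_gr_iff) (auto intro: weights_pos)

lemma min_weight_le_1: "min_weight \<le> 1"
proof -
  have "\<alpha> 1 \<le> tail_weight 1"
    unfolding tail_weight_def using order_pos by (intro member_le_sum) (auto intro: weights_nonneg)
  moreover have "min_weight \<le> \<alpha> 1"
    using order_pos by (intro min_weight_le) simp
  ultimately show ?thesis
    using tail_weight_1 by linarith
qed

lemma rate_pos: "0 < rate"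
  using min_weight_le_1 order_pos by (simp add: rate_def field_simps)

lemma rate_lt_1: "rate < 1"
  using min_weight_pos order_pos by (simp add: rate_def)

lemma rate_pow_ge: "1 - min_weight \<le> rate ^ K"
proof -
  have "1 + real K * - (min_weight / (2 * K)) \<le> rate ^ K"
    unfolding rate_def using Bernoulli_inequality[of "- (min_weight / (2 * K))" K] rate_pos
    by (simp add: rate_def)
  then show ?thesis
    using order_pos min_weight_pos by simp
qed

lemma width_pos: "0 < width"
  using rate_pos by (simp add: width_def)

lemma width_le_half: "width \<le> 1 / 2"
  using rate_pos rate_lt_1 by (simp add: width_def power_le_one)

lemma perturbation_bound:
  fixes a P :: "nat \<Rightarrow> complex" and d V :: real
  assumes close: "\<forall>j\<in>{1..K}. cmod (a j - \<alpha> j) \<le> d"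
    and bound: "\<forall>j\<in>{1..K}. cmod (P (n - j)) \<le> V"
  shows "cmod (\<Sum>j=1..K. (a j - \<alpha> j) * P (n - j)) \<le> K * d * V"
proof -
  have "0 \<le> d"
    using close order_pos by (meson atLeastAtMost_iff norm_ge_zero order_trans order_refl)
  then have "cmod (\<Sum>j=1..K. (a j - \<alpha> j) * P (n - j)) \<le> (\<Sum>j=1..K. d * V)"
    using close bound
    by (intro order_trans[OF norm_sum] sum_mono) (auto simp: norm_mult intro!: mult_mono)
  then show ?thesis by simp
qed

lemma conserved_Suc_diff_bound:
  fixes a P :: "nat \<Rightarrow> complex" and d V :: real
  assumes "K \<le> n" and rec: "P n = (\<Sum>j=1..K. a j * P (n - j))"
    and close: "\<forall>j\<in>{1..K}. cmod (a j - \<alpha> j) \<le> d"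
    and bound: "\<forall>j\<in>{1..K}. cmod (P (n - j)) \<le> V"
  shows "cmod (conserved P (Suc n) - conserved P n) \<le> K * d * V"
proof -
  let ?\<delta> = "conserved P (Suc n) - conserved P n"
  have "(\<Sum>i=1..K. \<alpha> i * (if i \<le> n then P (n - i) else 0)) = (\<Sum>j=1..K. \<alpha> j * P (n - j))"
    using \<open>K \<le> n\<close> by (intro sum.cong) auto
  then have "total_tail_weight * ?\<delta> = (\<Sum>j=1..K. (a j - \<alpha> j) * P (n - j))"
    unfolding conserved_Suc rec by (simp add: left_diff_distrib sum_subtractf)
  moreover have "cmod (complex_of_real total_tail_weight * ?\<delta>) = total_tail_weight * cmod ?\<delta>"
    using total_tail_weight_pos by (simp add: norm_mult abs_of_pos)
  ultimately have "total_tail_weight * cmod ?\<delta> \<le> K * d * V"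
    using perturbation_bound[OF close bound] by simp
  moreover have "cmod ?\<delta> \<le> total_tail_weight * cmod ?\<delta>"
    using mult_right_mono[OF total_tail_weight_ge_1 norm_ge_zero[of ?\<delta>]] by simp
  ultimately show ?thesis by linarith
qed

lemma deviation_le:
  fixes P :: "nat \<Rightarrow> complex" and E :: real
  assumes dev: "\<forall>j\<in>{1..K}. rate ^ (j - 1) * cmod (P (n - j) - conserved P n) \<le> E"
    and "j \<in> {1..K}"
  shows "cmod (P (n - j) - conserved P n) \<le> E / rate ^ (K - 1)"
proof -
  have "rate ^ (K - 1) \<le> rate ^ (j - 1)"
    using \<open>j \<in> {1..K}\<close> rate_pos rate_lt_1 by (intro power_decreasing) auto
  then have "rate ^ (K - 1) * cmod (P (n - j) - conserved P n) \<le> E"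
    using dev \<open>j \<in> {1..K}\<close> by (meson mult_right_mono norm_ge_zero order_trans)
  then show ?thesis
    using rate_pos by (simp add: field_simps mult.commute)
qed

text \<open>Removing a multiple of the tail weights from \<open>\<alpha>\<close> leaves nonnegative weights of total mass
  \<open>1 - min_weight \<le> rate ^ K\<close> which average the deviations from the conserved value in the
  same way as \<open>\<alpha>\<close>, because the tail-weighted deviations sum to zero.\<close>
definition residual_weight :: "nat \<Rightarrow> real" where
  "residual_weight j = \<alpha> j - min_weight / total_tail_weight * tail_weight j"

lemma residual_weight_nonneg:
  assumes "j \<in> {1..K}"
  shows "0 \<le> residual_weight j"
proof -
  have c: "0 \<le> min_weight / total_tail_weight" "min_weight / total_tail_weight \<le> min_weight"
    using total_tail_weight_ge_1 min_weight_pos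
    by (auto simp: field_simps intro: order_trans[OF _ mult_right_mono[OF total_tail_weight_ge_1]])
  show ?thesis
    using min_weight_le[OF assms] mult_mono[OF c(2) tail_weight_le_1] tail_weight_nonneg[of j] c assms
    by (force simp: residual_weight_def)
qed

lemma sum_residual_weight: "(\<Sum>j=1..K. residual_weight j) = 1 - min_weight"
proof -
  have "(\<Sum>j=1..K. min_weight / total_tail_weight * tail_weight j) =
      min_weight / total_tail_weight * total_tail_weight"
    unfolding total_tail_weight_def by (rule sum_distrib_left[symmetric])
  then show ?thesis
    using total_tail_weight_pos by (simp add: residual_weight_def sum_subtractf)
qed

lemma average_minus_conserved:
  fixes P :: "nat \<Rightarrow> complex"
  assumes "K \<le> n"
  shows "(\<Sum>j=1..K. \<alpha> j * P (n - j)) - conserved P n =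
    (\<Sum>j=1..K. residual_weight j * (P (n - j) - conserved P n))"
proof -
  define e where "e j = P (n - j) - conserved P n" for j
  define c where "c = min_weight / total_tail_weight"
  have "(\<Sum>j=1..K. \<alpha> j * P (n - j)) - conserved P n = (\<Sum>j=1..K. \<alpha> j * e j)"
    by (simp add: e_def right_diff_distrib sum_subtractf flip: sum_distrib_right of_real_sum)
  also have "\<dots> = (\<Sum>j=1..K. residual_weight j * e j) + c * (\<Sum>j=1..K. tail_weight j * e j)"
    by (simp add: residual_weight_def c_def left_diff_distrib sum_subtractf sum_distrib_left mult.assoc)
  also have "(\<Sum>j=1..K. tail_weight j * e j) = 0"
    using total_tail_weight_ge_1 conserved_eq_average[OF assms, of P]
    by (simp add: e_def right_diff_distrib sum_subtractf total_tail_weight_def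
        flip: sum_distrib_right of_real_sum)
  finally show ?thesis
    by (simp add: e_def)
qed

lemma average_deviation_contraction:
  fixes P :: "nat \<Rightarrow> complex" and E :: real
  assumes "K \<le> n"
    and dev: "\<forall>j\<in>{1..K}. rate ^ (j - 1) * cmod (P (n - j) - conserved P n) \<le> E"
  shows "cmod ((\<Sum>j=1..K. \<alpha> j * P (n - j)) - conserved P n) \<le> rate * E"
proof -
  have "0 \<le> E"
    using dev order_pos rate_pos
    by (meson atLeastAtMost_iff order_refl order_trans mult_nonneg_nonneg norm_ge_zero
        zero_le_power less_imp_le)
  have "cmod ((\<Sum>j=1..K. \<alpha> j * P (n - j)) - conserved P n) \<le>
      (\<Sum>j=1..K. residual_weight j * (E / rate ^ (K - 1)))"
    unfolding average_minus_conserved[OF assms(1)]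
  proof (intro order_trans[OF norm_sum] sum_mono)
    fix j assume j: "j \<in> {1..K}"
    show "cmod (residual_weight j * (P (n - j) - conserved P n)) \<le> residual_weight j * (E / rate ^ (K - 1))"
      using mult_left_mono[OF deviation_le[OF dev j] residual_weight_nonneg[OF j]]
        residual_weight_nonneg[OF j]
      by (simp add: norm_mult)
  qed
  also have "\<dots> = (1 - min_weight) * (E / rate ^ (K - 1))"
    by (simp only: sum_residual_weight flip: sum_distrib_right)
  also have "\<dots> \<le> rate ^ K * (E / rate ^ (K - 1))"
    using rate_pos \<open>0 \<le> E\<close> by (intro mult_right_mono rate_pow_ge) simp
  also have "rate ^ K = rate * rate ^ (K - 1)"
    using order_pos by (cases K) auto
  also have "rate * rate ^ (K - 1) * (E / rate ^ (K - 1)) = rate * E"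
    using rate_pos by simp
  finally show ?thesis .
qed

lemma recurrence_deviation_bound:
  fixes a P :: "nat \<Rightarrow> complex" and d V E :: real
  assumes "K \<le> n" and rec: "P n = (\<Sum>j=1..K. a j * P (n - j))"
    and close: "\<forall>j\<in>{1..K}. cmod (a j - \<alpha> j) \<le> d"
    and bound: "\<forall>j\<in>{1..K}. cmod (P (n - j)) \<le> V"
    and dev: "\<forall>j\<in>{1..K}. rate ^ (j - 1) * cmod (P (n - j) - conserved P n) \<le> E"
  shows "cmod (P n - conserved P n) \<le> rate * E + K * d * V"
proof -
  define A where "A = (\<Sum>j=1..K. \<alpha> j * P (n - j)) - conserved P n"
  define B where "B = (\<Sum>j=1..K. (a j - \<alpha> j) * P (n - j))"
  have decomposition: "P n - conserved P n = A + B"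
    by (simp add: A_def B_def rec left_diff_distrib sum_subtractf)
  show ?thesis
    unfolding decomposition
    using norm_triangle_ineq[of A B] average_deviation_contraction[OF assms(1) dev, folded A_def]
      perturbation_bound[OF close bound, folded B_def]
    by linarith
qed

lemma deviation_Suc_bound:
  fixes a P :: "nat \<Rightarrow> complex" and d V E :: real
  assumes "K \<le> n" and rec: "P n = (\<Sum>j=1..K. a j * P (n - j))"
    and close: "\<forall>j\<in>{1..K}. cmod (a j - \<alpha> j) \<le> d"
    and bound: "\<forall>j\<in>{1..K}. cmod (P (n - j)) \<le> V"
    and dev: "\<forall>j\<in>{1..K}. rate ^ (j - 1) * cmod (P (n - j) - conserved P n) \<le> E"
  shows "\<forall>j\<in>{1..K}. rate ^ (j - 1) * cmod (P (Suc n - j) - conserved P (Suc n)) \<le>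
    rate * E + 2 * K * d * V"
proof
  fix j assume j: "j \<in> {1..K}"
  let ?s = "conserved P n" and ?s' = "conserved P (Suc n)"
  have shift: "cmod (?s' - ?s) \<le> K * d * V"
    by (rule conserved_Suc_diff_bound[OF assms(1-4)])
  have old: "rate ^ (j - 1) * cmod (P (Suc n - j) - ?s) \<le> rate * E + K * d * V"
  proof (cases "j = 1")
    case True
    then show ?thesis
      using recurrence_deviation_bound[OF assms] by simp
  next
    case False
    then obtain i where i: "j = Suc i" "i \<in> {1..K}"
      using j by (cases j) auto
    then have "rate ^ (j - 1) * cmod (P (Suc n - j) - ?s) = rate * (rate ^ (i - 1) * cmod (P (n - i) - ?s))"
      by (cases i) auto
    also have "\<dots> \<le> rate * E"
      using dev i(2) rate_pos by (simp add: mult_left_mono)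
    finally show ?thesis
      using shift norm_ge_zero[of "?s' - ?s"] by linarith
  qed
  have "cmod (P (Suc n - j) - ?s') \<le> cmod (P (Suc n - j) - ?s) + cmod (?s' - ?s)"
    using norm_triangle_ineq4[of "P (Suc n - j) - ?s" "?s' - ?s"] by simp
  then have "rate ^ (j - 1) * cmod (P (Suc n - j) - ?s') \<le>
      rate ^ (j - 1) * cmod (P (Suc n - j) - ?s) + rate ^ (j - 1) * cmod (?s' - ?s)"
    using rate_pos by (simp add: distrib_left[symmetric] mult_left_mono)
  also have "rate ^ (j - 1) * cmod (?s' - ?s) \<le> cmod (?s' - ?s)"
    using rate_pos rate_lt_1 by (simp add: mult_left_le_one_le power_le_one)
  finally show "rate ^ (j - 1) * cmod (P (Suc n - j) - ?s') \<le> rate * E + 2 * K * d * V"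
    using old shift by simp
qed

definition in_cone :: "(nat \<Rightarrow> complex) \<Rightarrow> nat \<Rightarrow> bool" where
  "in_cone P n \<longleftrightarrow> conserved P n \<noteq> 0 \<and>
     (\<forall>j\<in>{1..K}. rate ^ (j - 1) * cmod (P (n - j) - conserved P n) \<le> width * cmod (conserved P n))"

lemma in_cone_bound:
  assumes "in_cone P n" and "j \<in> {1..K}"
  shows "cmod (P (n - j)) \<le> 3 / 2 * cmod (conserved P n)"
proof -
  let ?s = "conserved P n"
  have "cmod (P (n - j) - ?s) \<le> width * cmod ?s / rate ^ (K - 1)"
    using assms deviation_le[of P n "width * cmod ?s" j] by (simp add: in_cone_def)
  also have "\<dots> = cmod ?s / 2"
    using rate_pos by (simp add: width_def)
  finally show ?thesis
    using norm_triangle_ineq[of "P (n - j) - ?s" ?s] by simp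
qed

lemma in_cone_Suc_estimates:
  fixes a P :: "nat \<Rightarrow> complex" and d :: real
  assumes cone: "in_cone P n" and "K \<le> n" and rec: "P n = (\<Sum>j=1..K. a j * P (n - j))"
    and close: "\<forall>j\<in>{1..K}. cmod (a j - \<alpha> j) \<le> d"
  shows "cmod (conserved P (Suc n) - conserved P n) \<le> 3 / 2 * (K * d * cmod (conserved P n))"
    and "\<forall>j\<in>{1..K}. rate ^ (j - 1) * cmod (P (Suc n - j) - conserved P (Suc n)) \<le>
      rate * (width * cmod (conserved P n)) + 3 * (K * d * cmod (conserved P n))"
proof -
  have bound: "\<forall>j\<in>{1..K}. cmod (P (n - j)) \<le> 3 / 2 * cmod (conserved P n)"
    using in_cone_bound[OF cone] by simp
  have dev: "\<forall>j\<in>{1..K}. rate ^ (j - 1) * cmod (P (n - j) - conserved P n) \<le> width * cmod (conserved P n)"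
    using cone by (simp add: in_cone_def)
  show "cmod (conserved P (Suc n) - conserved P n) \<le> 3 / 2 * (K * d * cmod (conserved P n))"
    using conserved_Suc_diff_bound[OF \<open>K \<le> n\<close> rec close bound] by (simp add: ac_simps)
  show "\<forall>j\<in>{1..K}. rate ^ (j - 1) * cmod (P (Suc n - j) - conserved P (Suc n)) \<le>
      rate * (width * cmod (conserved P n)) + 3 * (K * d * cmod (conserved P n))"
    using deviation_Suc_bound[OF \<open>K \<le> n\<close> rec close bound dev] by (simp add: ac_simps)
qed

lemma in_cone_Suc:
  fixes a P :: "nat \<Rightarrow> complex" and d :: real
  assumes cone: "in_cone P n" and "K \<le> n" and rec: "P n = (\<Sum>j=1..K. a j * P (n - j))"
    and close: "\<forall>j\<in>{1..K}. cmod (a j - \<alpha> j) \<le> d"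
    and small: "4 * K * d \<le> width * (1 - rate)"
  shows "in_cone P (Suc n)"
proof -
  define S where "S = cmod (conserved P n)"
  define S' where "S' = cmod (conserved P (Suc n))"
  define X where "X = K * d * S"
  note est = in_cone_Suc_estimates[OF cone \<open>K \<le> n\<close> rec close, folded S_def X_def]
  have "0 < S"
    using cone by (simp add: in_cone_def S_def)
  have "0 \<le> d"
    using close order_pos by (meson atLeastAtMost_iff norm_ge_zero order_trans order_refl)
  then have "0 \<le> X"
    using \<open>0 < S\<close> by (simp add: X_def)
  have S': "S - 3 / 2 * X \<le> S'"
    using est(1) norm_triangle_ineq2[of "conserved P n" "conserved P (Suc n)"]
    by (simp add: S_def S'_def norm_minus_commute)
  have "4 * X \<le> width * S - rate * (width * S)"
    using mult_right_mono[OF small, of S] \<open>0 < S\<close> by (simp add: X_def algebra_simps)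
  moreover have "width * S \<le> S / 2" and "width * X \<le> X / 2"
    using mult_right_mono[OF width_le_half, of S] mult_right_mono[OF width_le_half, of X]
      \<open>0 < S\<close> \<open>0 \<le> X\<close> by simp_all
  moreover have "width * S - 3 / 2 * (width * X) \<le> width * S'"
    using mult_left_mono[OF S', of width] width_pos by (simp add: right_diff_distrib)
  moreover have "0 \<le> rate * (width * S)"
    using rate_pos width_pos \<open>0 < S\<close> by simp
  ultimately have "0 < S'" and "rate * (width * S) + 3 * X \<le> width * S'"
    using S' \<open>0 < S\<close> \<open>0 \<le> X\<close> by linarith+
  then show ?thesis
    using est(2) unfolding in_cone_def S'_def by (auto intro: order_trans)
qed

lemma in_cone_imp_nonzero:
  assumes "in_cone P (Suc n)"
  shows "P n \<noteq> 0"
proof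
  assume "P n = 0"
  have "rate ^ (1 - 1) * cmod (P (Suc n - 1) - conserved P (Suc n)) \<le> width * cmod (conserved P (Suc n))"
    using assms order_pos unfolding in_cone_def by (meson atLeastAtMost_iff order_refl)
  then have "cmod (conserved P (Suc n)) \<le> width * cmod (conserved P (Suc n))"
    using \<open>P n = 0\<close> by simp
  then have "1 \<le> width"
    using assms by (simp add: in_cone_def mult_le_cancel_right1)
  then show False
    using width_le_half by simp
qed

lemma in_cone_imp_nonvanishing:
  fixes a P :: "nat \<Rightarrow> complex" and d :: real
  assumes "in_cone P n0" and "K \<le> n0"
    and rec: "\<forall>n\<ge>n0. P n = (\<Sum>j=1..K. a j * P (n - j))"
    and close: "\<forall>j\<in>{1..K}. cmod (a j - \<alpha> j) \<le> d"
    and small: "4 * K * d \<le> width * (1 - rate)"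
  shows "\<forall>n\<ge>n0. P n \<noteq> 0"
proof (intro allI impI)
  fix n assume "n0 \<le> n"
  have "in_cone P (n0 + m)" for m
  proof (induction m)
    case (Suc m)
    have "P (n0 + m) = (\<Sum>j=1..K. a j * P (n0 + m - j))"
      using rec by simp
    with Suc.IH show ?case
      using in_cone_Suc[OF Suc.IH _ _ close small] \<open>K \<le> n0\<close> by simp
  qed (simp add: \<open>in_cone P n0\<close>)
  then have "in_cone P (Suc n)"
    using \<open>n0 \<le> n\<close> by (metis add_Suc_right le_Suc_ex)
  then show "P n \<noteq> 0"
    by (rule in_cone_imp_nonzero)
qed

lemma deviation_decay:
  fixes Q :: "nat \<Rightarrow> complex"
  assumes rec: "\<forall>n\<ge>K. Q n = (\<Sum>j=1..K. \<alpha> j * Q (n - j))"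
  shows "\<forall>j\<in>{1..K}. rate ^ (j - 1) * cmod (Q (K + m - j) - conserved Q (K + m)) \<le>
      rate ^ m * (\<Sum>i=1..K. cmod (Q (K - i) - conserved Q K))"
proof (induction m)
  case 0
  show ?case
  proof
    fix j assume j: "j \<in> {1..K}"
    have "rate ^ (j - 1) * cmod (Q (K - j) - conserved Q K) \<le> cmod (Q (K - j) - conserved Q K)"
      using rate_pos rate_lt_1 by (simp add: mult_left_le_one_le power_le_one)
    also have "\<dots> \<le> (\<Sum>i=1..K. cmod (Q (K - i) - conserved Q K))"
      using j by (intro member_le_sum) auto
    finally show "rate ^ (j - 1) * cmod (Q (K + 0 - j) - conserved Q (K + 0)) \<le>
        rate ^ 0 * (\<Sum>i=1..K. cmod (Q (K - i) - conserved Q K))"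
      by simp
  qed
next
  case (Suc m)
  have "K \<le> K + m" and rec_m: "Q (K + m) = (\<Sum>j=1..K. \<alpha> j * Q (K + m - j))"
    using rec by simp_all
  have exact: "\<forall>j\<in>{1..K}. cmod (complex_of_real (\<alpha> j) - \<alpha> j) \<le> 0"
    by simp
  have bound: "\<forall>j\<in>{1..K}. cmod (Q (K + m - j)) \<le> (\<Sum>i=1..K. cmod (Q (K + m - i)))"
    by (auto intro!: member_le_sum)
  from deviation_Suc_bound[OF \<open>K \<le> K + m\<close> rec_m exact bound Suc.IH]
  show ?case
    by (simp add: mult.assoc)
qed

lemma strictly_in_cone_eventually:
  fixes Q :: "nat \<Rightarrow> complex"
  assumes rec: "\<forall>n\<ge>K. Q n = (\<Sum>j=1..K. \<alpha> j * Q (n - j))" and nz: "conserved Q K \<noteq> 0"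
  obtains n0 where "K \<le> n0" and "conserved Q n0 \<noteq> 0"
    and "\<forall>j\<in>{1..K}. rate ^ (j - 1) * cmod (Q (n0 - j) - conserved Q n0) < width * cmod (conserved Q n0)"
proof -
  define E where "E = (\<Sum>i=1..K. cmod (Q (K - i) - conserved Q K))"
  have "(\<lambda>m. rate ^ m * E) \<longlonglongrightarrow> 0"
    using rate_pos rate_lt_1 by (intro tendsto_mult_left_zero LIMSEQ_power_zero) simp
  then have "\<forall>\<^sub>F m in sequentially. rate ^ m * E < width * cmod (conserved Q K)"
    using width_pos nz by (intro order_tendstoD) auto
  then obtain m where m: "rate ^ m * E < width * cmod (conserved Q K)"
    by (auto simp: eventually_sequentially)
  have "conserved Q (K + m) = conserved Q K"
    using rec by (intro conserved_of_solution) auto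
  then show ?thesis
    using that[of "K + m"] nz deviation_decay[OF rec, of m] m
    by (auto simp: E_def intro: le_less_trans)
qed

lemma eventually_in_cone:
  fixes Q :: "nat \<Rightarrow> complex" and P :: "'x \<Rightarrow> nat \<Rightarrow> complex"
  assumes nz: "conserved Q n0 \<noteq> 0"
    and strict: "\<forall>j\<in>{1..K}. rate ^ (j - 1) * cmod (Q (n0 - j) - conserved Q n0) < width * cmod (conserved Q n0)"
    and lim: "\<And>n. ((\<lambda>x. P x n) \<longlongrightarrow> Q n) F"
  shows "\<forall>\<^sub>F x in F. in_cone (P x) n0"
proof -
  have lim_conserved: "((\<lambda>x. conserved (P x) n0) \<longlongrightarrow> conserved Q n0) F"
    by (rule tendsto_conserved[OF lim])
  have "\<forall>\<^sub>F x in F. conserved (P x) n0 \<noteq> 0"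
    by (rule tendsto_imp_eventually_ne[OF lim_conserved nz])
  moreover have "\<forall>\<^sub>F x in F. \<forall>j\<in>{1..K}.
      rate ^ (j - 1) * cmod (P x (n0 - j) - conserved (P x) n0) < width * cmod (conserved (P x) n0)"
  proof (intro eventually_ball_finite ballI)
    fix j assume "j \<in> {1..K}"
    have "((\<lambda>x. width * cmod (conserved (P x) n0) - rate ^ (j - 1) * cmod (P x (n0 - j) - conserved (P x) n0))
        \<longlongrightarrow> width * cmod (conserved Q n0) - rate ^ (j - 1) * cmod (Q (n0 - j) - conserved Q n0)) F"
      by (intro tendsto_intros lim_conserved lim)
    then have "\<forall>\<^sub>F x in F. 0 < width * cmod (conserved (P x) n0) - rate ^ (j - 1) * cmod (P x (n0 - j) - conserved (P x) n0)"
      using strict \<open>j \<in> {1..K}\<close> by (intro order_tendstoD) auto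
    then show "\<forall>\<^sub>F x in F. rate ^ (j - 1) * cmod (P x (n0 - j) - conserved (P x) n0) < width * cmod (conserved (P x) n0)"
      by (rule eventually_mono) simp
  qed simp
  ultimately show ?thesis
    by eventually_elim (auto simp: in_cone_def less_imp_le)
qed

lemma eventually_weights_close:
  fixes a :: "'x \<Rightarrow> nat \<Rightarrow> complex"
  assumes "\<And>j. ((\<lambda>x. a x j) \<longlongrightarrow> \<alpha> j) F" and "0 < d"
  shows "\<forall>\<^sub>F x in F. \<forall>j\<in>{1..K}. cmod (a x j - \<alpha> j) \<le> d"
proof (intro eventually_ball_finite ballI)
  fix j
  have "((\<lambda>x. cmod (a x j - \<alpha> j)) \<longlongrightarrow> 0) F"
    using tendsto_norm_zero[OF LIM_zero[OF assms(1)[of j]]] .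
  from order_tendstoD(2)[OF this \<open>0 < d\<close>]
  show "\<forall>\<^sub>F x in F. cmod (a x j - \<alpha> j) \<le> d"
    by (rule eventually_mono) simp
qed simp

text \<open>Nonvanishing is robust: the cone condition at a single time \<open>n0\<close> is an open condition on
  finitely many values, and once it holds a nearby recurrence keeps the solution in the cone.\<close>
theorem eventually_nonvanishing:
  fixes Q :: "nat \<Rightarrow> complex" and a P :: "'x \<Rightarrow> nat \<Rightarrow> complex"
  assumes rec_lim: "\<forall>n\<ge>K. Q n = (\<Sum>j=1..K. \<alpha> j * Q (n - j))" and nz: "conserved Q K \<noteq> 0"
    and rec: "\<And>x n. K \<le> n \<Longrightarrow> P x n = (\<Sum>j=1..K. a x j * P x (n - j))"
    and coeff_lim: "\<And>j. ((\<lambda>x. a x j) \<longlongrightarrow> \<alpha> j) F"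
    and value_lim: "\<And>n. ((\<lambda>x. P x n) \<longlongrightarrow> Q n) F"
  shows "\<exists>n0. \<forall>\<^sub>F x in F. \<forall>n\<ge>n0. P x n \<noteq> 0"
proof -
  obtain n0 where "K \<le> n0" and nz0: "conserved Q n0 \<noteq> 0"
    and strict: "\<forall>j\<in>{1..K}. rate ^ (j - 1) * cmod (Q (n0 - j) - conserved Q n0) < width * cmod (conserved Q n0)"
    using strictly_in_cone_eventually[OF rec_lim nz] by blast
  define d where "d = width * (1 - rate) / (4 * K)"
  have "0 < d"
    using width_pos rate_lt_1 order_pos by (simp add: d_def)
  have small: "4 * K * d \<le> width * (1 - rate)"
    using order_pos by (simp add: d_def)
  have "\<forall>\<^sub>F x in F. in_cone (P x) n0"
    by (rule eventually_in_cone[OF nz0 strict value_lim])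
  moreover have "\<forall>\<^sub>F x in F. \<forall>j\<in>{1..K}. cmod (a x j - \<alpha> j) \<le> d"
    by (rule eventually_weights_close[OF coeff_lim \<open>0 < d\<close>])
  ultimately have "\<forall>\<^sub>F x in F. \<forall>n\<ge>n0. P x n \<noteq> 0"
  proof eventually_elim
    case (elim x)
    then show ?case
      using \<open>K \<le> n0\<close> rec small by (intro in_cone_imp_nonvanishing) auto
  qed
  then show ?thesis ..
qed

end

section \<open>The recurrence at the point \<open>\<lambda>\<close>\<close>

definition crit_point :: "nat \<Rightarrow> real \<Rightarrow> real" where
  "crit_point k t = - (1 - t) / (real k + 2 - (real k + 1) * t)"

definition crit_weight :: "nat \<Rightarrow> real \<Rightarrow> nat \<Rightarrow> real" where
  "crit_weight k t j = (if j = 1 then t - crit_point k t else - crit_point k t * (1 - t))"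

lemma char_rec_coeff_crit_point:
  "char_rec_coeff t (crit_point k t) j = crit_weight k t j"
  by (simp add: char_rec_coeff_def crit_weight_def)

lemma averaging_recurrence_crit_weight:
  assumes "0 < t" and "t < 1"
  shows "averaging_recurrence (k + 2) (crit_weight k t)"
proof
  define D where "D = real k + 2 - (real k + 1) * t"
  have "(real k + 1) * t < real k + 1"
    using mult_strict_left_mono[of t 1 "real k + 1"] assms by simp
  then have "0 < D"
    unfolding D_def by linarith
  then have L: "crit_point k t < 0" and LD: "crit_point k t * D = - (1 - t)"
    using assms by (simp_all add: crit_point_def D_def divide_neg_pos)
  show "1 \<le> k + 2"
    by simp
  show "0 < crit_weight k t j" for j
    using assms L by (simp add: crit_weight_def mult_neg_pos)
  have "(\<Sum>j=1..k+2. crit_weight k t j) = crit_weight k t 1 + (\<Sum>j=2..k+2. crit_weight k t j)"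
    by (simp add: sum.atLeast_Suc_atMost numeral_2_eq_2)
  also have "(\<Sum>j=2..k+2. crit_weight k t j) = (real k + 1) * (- crit_point k t * (1 - t))"
    by (simp add: crit_weight_def)
  finally show "(\<Sum>j=1..k+2. crit_weight k t j) = 1"
    using LD by (simp add: crit_weight_def D_def algebra_simps)
qed

lemma conserved_A_char_crit_point:
  assumes "0 < t" and "t < 1"
  shows "averaging_recurrence.conserved (k + 2) (crit_weight k t) (A_char k t (crit_point k t)) (k + 2) \<noteq> 0"
proof -
  interpret averaging_recurrence "k + 2" "crit_weight k t"
    using assms by (rule averaging_recurrence_crit_weight)
  let ?N = "fps_nth (char_numerator k t)"
  have "total_tail_weight * conserved (A_char k t (crit_point k t)) (k + 2) = (\<Sum>m<k+2. ?N m)"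
    by (rule conserved_of_inhomogeneous) (simp add: A_char_rec[where z="of_real _"] char_rec_coeff_crit_point)
  also have "\<dots> = ?N 0 + (\<Sum>m<k+1. ?N (Suc m))"
    by (simp add: sum.lessThan_Suc_shift del: sum.lessThan_Suc)
  also have "\<dots> = complex_of_real (1 + (real k + 1) * (1 - t))"
    by (simp add: char_numerator_def)
  finally have "total_tail_weight * conserved (A_char k t (crit_point k t)) (k + 2) =
      complex_of_real (1 + (real k + 1) * (1 - t))" .
  moreover have "0 < 1 + (real k + 1) * (1 - t)"
    using assms by (simp add: add_pos_nonneg)
  ultimately show ?thesis
    by (metis mult_zero_right of_real_eq_0_iff order_less_irrefl)
qed

lemma eventually_A_char_nonvanishing:
  assumes "0 < t" and "t < 1" and lim: "(f \<longlongrightarrow> complex_of_real (crit_point k t)) F"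
  shows "\<exists>n0. \<forall>\<^sub>F x in F. \<forall>n\<ge>n0. A_char k t (f x) n \<noteq> 0"
proof -
  interpret averaging_recurrence "k + 2" "crit_weight k t"
    using assms(1,2) by (rule averaging_recurrence_crit_weight)
  show ?thesis
  proof (rule eventually_nonvanishing)
    show "\<forall>n\<ge>k + 2. A_char k t (crit_point k t) n =
        (\<Sum>j=1..k+2. crit_weight k t j * A_char k t (crit_point k t) (n - j))"
      by (simp add: A_char_rec_tail char_rec_coeff_crit_point)
    show "conserved (A_char k t (crit_point k t)) (k + 2) \<noteq> 0"
      using assms(1,2) by (rule conserved_A_char_crit_point)
    show "A_char k t (f x) n = (\<Sum>j=1..k+2. char_rec_coeff t (f x) j * A_char k t (f x) (n - j))"
      if "k + 2 \<le> n" for x n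
      using that by (rule A_char_rec_tail)
    show "((\<lambda>x. char_rec_coeff t (f x) j) \<longlongrightarrow> crit_weight k t j) F" for j
      using tendsto_char_rec_coeff[OF lim, of t j] by (simp add: char_rec_coeff_crit_point)
    show "((\<lambda>x. A_char k t (f x) n) \<longlongrightarrow> A_char k t (crit_point k t) n) F" for n
      by (rule tendsto_A_char[OF lim])
  qed
qed

theorem proposition6:
  fixes k :: nat and t :: real
  assumes "0 < t" and "t < 1"
  shows "complex_of_real (- (1 - t) / (real k + 2 - (real k + 1) * t)) \<notin> limit_set (A_mat k t)"
proof
  assume "complex_of_real (- (1 - t) / (real k + 2 - (real k + 1) * t)) \<in> limit_set (A_mat k t)"
  then obtain idx \<mu> where "strict_mono idx"
    and eig: "\<And>m. eigenvalue (map_mat complex_of_real (A_mat k t (idx m))) (\<mu> m)"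
    and lim: "\<mu> \<longlonglongrightarrow> crit_point k t"
    unfolding limit_set_def crit_point_def by blast
  obtain n0 N where N: "\<And>m. N \<le> m \<Longrightarrow> \<forall>n\<ge>n0. A_char k t (\<mu> m) n \<noteq> 0"
    using eventually_A_char_nonvanishing[OF assms lim] by (auto simp: eventually_sequentially)
  define m where "m = max N n0"
  have "n0 \<le> idx m"
    using seq_suble[OF \<open>strict_mono idx\<close>, of m] by (simp add: m_def)
  then have "A_char k t (\<mu> m) (idx m) \<noteq> 0"
    using N[of m] by (simp add: m_def)
  moreover have "map_mat complex_of_real (A_mat k t (idx m)) \<in> carrier_mat (idx m) (idx m)"
    by (simp add: A_mat_def toeplitz_hessenberg_def)
  ultimately show False
    using eigenvalue_det eig[of m] unfolding A_char_def by blast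
qed

end
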